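(* Let $X$ be a real Hilbert space, $n\in\{3,4,\ldots\}$, $U_1,\ldots,U_n$ closed linear subspaces of $X$, $P_i:=P_{U_i}$, $Z:=U_1\cap\cdots\cap U_n$. Define $M\colon X^{n-1}\to X^n$ by $M(z_1,\ldots,z_{n-1})=(x_1,\ldots,x_n)$ with $x_1=P_1z_1$, $x_i=P_i(x_{i-1}+z_i-z_{i-1})$ for $2\le i\le n-1$, $x_n=P_n(x_1+x_{n-1}-z_{n-1})$, and define $T\colon X^{n-1}\to X^{n-1}$ by $T\mathbf z=\mathbf z+\big((Q_2-Q_1)M\mathbf z,\ldots,(Q_n-Q_{n-1})M\mathbf z\big)$, where $Q_i\colon X^n\to X$ is the $i$-th coordinate map. Let \[ \Psi\colon U_1^\perp\times\cdots\times U_{n-1}^\perp\to X^{n-1},\quad (y_1,\ldots,y_{n-1})\mapsto(y_1,\,y_1+y_2,\,\ldots,\,y_1+\cdots+y_{n-1}). \] Then $\Psi$ is a continuous linear operator with closed range, and \[ \operatorname{Fix}T=\{(z,\ldots,z)\in X^{n-1}: z\in Z\}\oplus E, \] where \[ E:=\operatorname{ran}\Psi\cap(X^{n-2}\times U_n^\perp)\subseteq U_1^\perp\times(U_1^\perp+U_2^\perp)\times\cdots\times(U_1^\perp+\cdots+U_{n-2}^\perp)\times\big((U_1^\perp+\cdots+U_{n-1}^\perp)\cap U_n^\perp\big). \] Moreover, for $\mathbf z=(z_1,\ldots,z_{n-1})\in X^{n-1}$ and $\bar z=(z_1+\cdots+z_{n-1})/(n-1)$, \[ P_{\operatorname{Fix}T}\mathbf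 z=(P_Z\bar z,\ldots,P_Z\bar z)\oplus P_E\mathbf z, \] and hence $P_1\big(Q_1P_{\operatorname{Fix}T}\mathbf z\big)=P_Z\bar z$, where here $Q_1$ denotes the first-coordinate map on $X^{n-1}$.
   Context: $P_S$ denotes the orthogonal projection onto a closed linear subspace (or closed convex set) $S$; $\oplus$ denotes a sum of mutually orthogonal vectors or subspaces; $\operatorname{ran}$ denotes range. *)

theory Defs
  imports "HOL-Analysis.Analysis"
begin

text \<open>Tuples in X^k are represented as functions nat => X with indices 1..k
  (all other entries zero).\<close>

definition tup :: "nat \<Rightarrow> (nat \<Rightarrow> 'a::zero) set" where
  "tup k = {z. \<forall>i. (i < 1 \<or> k < i) \<longrightarrow> z i = 0}"

definition tinner :: "nat \<Rightarrow> (nat \<Rightarrow> 'a::real_inner) \<Rightarrow> (nat \<Rightarrow> 'a) \<Rightarrow> real" where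
  "tinner k z w = (\<Sum>i\<in>{1..k}. inner (z i) (w i))"

definition tnorm :: "nat \<Rightarrow> (nat \<Rightarrow> 'a::real_inner) \<Rightarrow> real" where
  "tnorm k z = sqrt (tinner k z z)"

definition tdiff :: "(nat \<Rightarrow> 'a::ab_group_add) \<Rightarrow> (nat \<Rightarrow> 'a) \<Rightarrow> nat \<Rightarrow> 'a" where
  "tdiff z w = (\<lambda>i. z i - w i)"

definition proj :: "'a::real_inner set \<Rightarrow> 'a \<Rightarrow> 'a" where
  "proj S x = (SOME p. p \<in> S \<and> (\<forall>q\<in>S. norm (x - p) \<le> norm (x - q)))"

definition tproj :: "nat \<Rightarrow> (nat \<Rightarrow> 'a::real_inner) set \<Rightarrow> (nat \<Rightarrow> 'a) \<Rightarrow> nat \<Rightarrow> 'a" where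
  "tproj k S z = (SOME p. p \<in> S \<and> (\<forall>q\<in>S. tnorm k (tdiff z p) \<le> tnorm k (tdiff z q)))"

definition perp :: "'a::real_inner set \<Rightarrow> 'a set" where
  "perp U = {y. \<forall>u\<in>U. inner u y = 0}"

definition closed_subspace :: "'a::real_normed_vector set \<Rightarrow> bool" where
  "closed_subspace U \<longleftrightarrow> subspace U \<and> closed U"

definition perpsum :: "(nat \<Rightarrow> 'a::real_inner set) \<Rightarrow> nat \<Rightarrow> 'a set" where
  "perpsum U i = {(\<Sum>j\<in>{1..i}. y j) | y. \<forall>j\<in>{1..i}. y j \<in> perp (U j)}"

fun mx :: "(nat \<Rightarrow> 'a \<Rightarrow> 'a) \<Rightarrow> (nat \<Rightarrow> 'a::ab_group_add) \<Rightarrow> nat \<Rightarrow> 'a" where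
  "mx P z 0 = 0"
| "mx P z (Suc 0) = P 1 (z 1)"
| "mx P z (Suc (Suc k)) = P (k + 2) (mx P z (Suc k) + z (k + 2) - z (k + 1))"

definition Mop :: "nat \<Rightarrow> (nat \<Rightarrow> 'a::real_inner set) \<Rightarrow> (nat \<Rightarrow> 'a) \<Rightarrow> nat \<Rightarrow> 'a" where
  "Mop n U z i =
     (if 1 \<le> i \<and> i \<le> n - 1 then mx (\<lambda>j. proj (U j)) z i
      else if i = n then proj (U n) (mx (\<lambda>j. proj (U j)) z 1 + mx (\<lambda>j. proj (U j)) z (n - 1) - z (n - 1))
      else 0)"

definition Top :: "nat \<Rightarrow> (nat \<Rightarrow> 'a::real_inner set) \<Rightarrow> (nat \<Rightarrow> 'a) \<Rightarrow> nat \<Rightarrow> 'a" where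
  "Top n U z i = (if 1 \<le> i \<and> i \<le> n - 1 then z i + (Mop n U z (i + 1) - Mop n U z i) else 0)"

definition FixT :: "nat \<Rightarrow> (nat \<Rightarrow> 'a::real_inner set) \<Rightarrow> (nat \<Rightarrow> 'a) set" where
  "FixT n U = {z \<in> tup (n - 1). Top n U z = z}"

definition PsiDom :: "nat \<Rightarrow> (nat \<Rightarrow> 'a::real_inner set) \<Rightarrow> (nat \<Rightarrow> 'a) set" where
  "PsiDom n U = {y \<in> tup (n - 1). \<forall>i\<in>{1..n - 1}. y i \<in> perp (U i)}"

definition Psi :: "nat \<Rightarrow> (nat \<Rightarrow> 'a::real_inner) \<Rightarrow> nat \<Rightarrow> 'a" where
  "Psi n y i = (if 1 \<le> i \<and> i \<le> n - 1 then (\<Sum>j\<in>{1..i}. y j) else 0)"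

definition Eset :: "nat \<Rightarrow> (nat \<Rightarrow> 'a::real_inner set) \<Rightarrow> (nat \<Rightarrow> 'a) set" where
  "Eset n U = {w \<in> Psi n ` PsiDom n U. w (n - 1) \<in> perp (U n)}"

definition diag :: "nat \<Rightarrow> 'a::zero set \<Rightarrow> (nat \<Rightarrow> 'a) set" where
  "diag k Z = {d. \<exists>x\<in>Z. d = (\<lambda>i. if 1 \<le> i \<and> i \<le> k then x else 0)}"

definition tlinear_on :: "nat \<Rightarrow> (nat \<Rightarrow> 'a::real_vector) set \<Rightarrow> ((nat \<Rightarrow> 'a) \<Rightarrow> nat \<Rightarrow> 'a) \<Rightarrow> bool" where
  "tlinear_on k D f \<longleftrightarrow>
     (\<forall>y\<in>D. \<forall>y'\<in>D. \<forall>a b. (\<lambda>i. a *\<^sub>R y i + b *\<^sub>R y' i) \<in> D \<and>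
        f (\<lambda>i. a *\<^sub>R y i + b *\<^sub>R y' i) = (\<lambda>i. a *\<^sub>R f y i + b *\<^sub>R f y' i))"

definition tcontinuous_on :: "nat \<Rightarrow> (nat \<Rightarrow> 'a::real_inner) set \<Rightarrow> ((nat \<Rightarrow> 'a) \<Rightarrow> nat \<Rightarrow> 'a) \<Rightarrow> bool" where
  "tcontinuous_on k D f \<longleftrightarrow>
     (\<forall>y\<in>D. \<forall>e>0. \<exists>d>0. \<forall>y'\<in>D. tnorm k (tdiff y' y) < d \<longrightarrow> tnorm k (tdiff (f y') (f y)) < e)"

definition tclosed :: "nat \<Rightarrow> (nat \<Rightarrow> 'a::real_inner) set \<Rightarrow> bool" where
  "tclosed k S \<longleftrightarrow> S \<subseteq> tup k \<and>
     (\<forall>s z. (\<forall>m. s m \<in> S) \<and> z \<in> tup k \<and> (\<lambda>m. tnorm k (tdiff (s m) z)) \<longlonglongrightarrow> 0 \<longrightarrow> z \<in> S)"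

end

theory Submission
  imports Defs
begin

text \<open>
  A tuple \<open>z\<close> is fixed by \<open>T\<close> iff all entries of \<open>M z\<close> coincide, say with \<open>x\<close>. Writing
  \<open>z = (x, \<dots>, x) + e\<close> and padding \<open>e\<close> with \<open>e 0 = e n = 0\<close>, the \<open>i\<close>-th entry of \<open>M z\<close>
  becomes \<open>P\<^sub>i (x + e i - e (i - 1))\<close> once the previous entries equal \<open>x\<close>, and this is \<open>x\<close>
  iff \<open>x \<in> U\<^sub>i\<close> and \<open>e i - e (i - 1) \<in> U\<^sub>i\<^sup>\<bottom>\<close>. So \<open>Fix T\<close> is the diagonal of \<open>Z\<close> plus
  the set \<open>E\<close> of tuples whose increments lie in the \<open>U\<^sub>i\<^sup>\<bottom>\<close>, i.e. the range of \<open>\<Psi>\<close> cut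
  down by the last increment. Every \<open>x \<in> Z\<close> is orthogonal to all increments and hence to all
  entries of \<open>e\<close>; so the two summands are orthogonal, \<open>P\<^bsub>Fix T\<^esub>\<close> is the sum of the two
  projections, and projecting onto the diagonal of \<open>Z\<close> amounts to projecting the mean onto \<open>Z\<close>.
  Projections onto closed subspaces of \<open>X\<^sup>k\<close> exist by the Hilbert projection theorem
  (parallelogram law plus completeness), proved here for tuples; \<open>X\<close> itself is the case \<open>k = 1\<close>.
\<close>

section \<open>The Hilbert space of tuples\<close>

lemma tinner_self_eq_sum: "tinner k z z = (\<Sum>i\<in>{1..k}. (norm (z i))\<^sup>2)"
  by (simp add: tinner_def power2_norm_eq_inner)

lemma tinner_self_nonneg: "0 \<le> tinner k z z"
  by (simp add: tinner_self_eq_sum sum_nonneg)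

lemma tinner_commute: "tinner k z w = tinner k w z"
  by (simp add: tinner_def inner_commute)

lemma tinner_add_right: "tinner k a (\<lambda>i. b i + c i) = tinner k a b + tinner k a c"
  by (simp add: tinner_def inner_add_right sum.distrib)

lemma tinner_diff_left: "tinner k (\<lambda>i. a i - b i) c = tinner k a c - tinner k b c"
  by (simp add: tinner_def inner_diff_left sum_subtractf)

lemma tinner_add_self:
  "tinner k (\<lambda>i. u i + v i) (\<lambda>i. u i + v i) = tinner k u u + 2 * tinner k u v + tinner k v v"
  by (simp add: tinner_def inner_add_left inner_add_right inner_commute sum.distrib
      sum_distrib_left)

lemma tinner_diff_scaleR_self:
  "tinner k (\<lambda>i. u i - t *\<^sub>R c i) (\<lambda>i. u i - t *\<^sub>R c i)
     = tinner k u u - 2 * t * tinner k u c + t\<^sup>2 * tinner k c c"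
  by (simp add: tinner_def inner_diff_left inner_diff_right inner_commute power2_eq_square
      sum.distrib sum_subtractf sum_distrib_left algebra_simps)

lemma tinner_parallelogram:
  "tinner k (tdiff a b) (tdiff a b)
     = 2 * tinner k (tdiff z a) (tdiff z a) + 2 * tinner k (tdiff z b) (tdiff z b)
       - 4 * tinner k (tdiff z (\<lambda>i. (1/2) *\<^sub>R (a i + b i))) (tdiff z (\<lambda>i. (1/2) *\<^sub>R (a i + b i)))"
  by (simp add: tinner_def tdiff_def inner_diff_left inner_diff_right inner_add_left inner_add_right
      inner_commute sum.distrib sum_subtractf sum_distrib_left algebra_simps)

lemma tnorm_le_iff: "tnorm k a \<le> tnorm k b \<longleftrightarrow> tinner k a a \<le> tinner k b b"
  by (simp add: tnorm_def tinner_self_nonneg)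

lemma norm_sq_le_tinner: "i \<in> {1..k} \<Longrightarrow> (norm (z i))\<^sup>2 \<le> tinner k z z"
  unfolding tinner_self_eq_sum by (rule member_le_sum) auto

lemma norm_le_tnorm: "i \<in> {1..k} \<Longrightarrow> norm (z i) \<le> tnorm k z"
  unfolding tnorm_def by (rule real_le_rsqrt) (rule norm_sq_le_tinner)

lemma tup_outside: "w \<in> tup k \<Longrightarrow> i \<notin> {1..k} \<Longrightarrow> w i = 0"
  by (auto simp: tup_def not_le)

lemma tup_eqI:
  assumes "p \<in> tup k" "q \<in> tup k" "\<And>i. i \<in> {1..k} \<Longrightarrow> p i = q i"
  shows "p = q"
proof
  fix i
  show "p i = q i"
  proof (cases "i \<in> {1..k}")
    case False
    then show ?thesis using tup_outside[OF assms(1) False] tup_outside[OF assms(2) False] by simp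
  qed (rule assms(3))
qed

lemma tendsto_coord:
  assumes lim: "(\<lambda>m. tnorm k (tdiff (s m) w)) \<longlonglongrightarrow> 0" and "\<And>m. s m \<in> tup k" "w \<in> tup k"
  shows "(\<lambda>m. s m i) \<longlonglongrightarrow> w i"
proof (cases "i \<in> {1..k}")
  case True
  have bound: "norm (s m i - w i) \<le> tnorm k (tdiff (s m) w)" for m
    using norm_le_tnorm[OF True, of "tdiff (s m) w"] by (simp add: tdiff_def)
  have "(\<lambda>m. s m i - w i) \<longlonglongrightarrow> 0"
    by (rule Lim_null_comparison[OF _ lim]) (simp add: bound)
  then show ?thesis by (simp add: LIM_zero_iff)
next
  case False
  then show ?thesis using tup_outside[OF assms(2) False] tup_outside[OF assms(3) False] by simp
qed

lemma tnorm_tendsto_0: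
  assumes "\<And>i. i \<in> {1..k} \<Longrightarrow> (\<lambda>m. s m i) \<longlonglongrightarrow> w i"
  shows "(\<lambda>m. tnorm k (tdiff (s m) w)) \<longlonglongrightarrow> 0"
proof -
  have "(\<lambda>m. sqrt (\<Sum>i\<in>{1..k}. inner (s m i - w i) (s m i - w i)))
          \<longlonglongrightarrow> sqrt (\<Sum>i\<in>{1..k}. inner (w i - w i) (w i - w i))"
    by (intro tendsto_intros assms)
  then show ?thesis by (simp add: tnorm_def tinner_def tdiff_def)
qed

lemma tnorm_le_if_norm_le:
  assumes "0 \<le> c" and "\<And>i. i \<in> {1..k} \<Longrightarrow> norm (z i) \<le> c"
  shows "tnorm k z \<le> real k * c"
proof -
  have "tinner k z z \<le> (\<Sum>i\<in>{1..k}. c\<^sup>2)"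
    unfolding tinner_self_eq_sum by (rule sum_mono) (use assms in \<open>auto intro: power_mono\<close>)
  also have "\<dots> = real k * c\<^sup>2" by simp
  also have "\<dots> \<le> (real k * c)\<^sup>2"
  proof -
    have "real k \<le> (real k)\<^sup>2" by (cases k) (auto simp: power2_eq_square)
    then show ?thesis by (simp add: power_mult_distrib mult_right_mono)
  qed
  finally show ?thesis using assms(1) by (simp add: tnorm_def real_sqrt_le_iff real_le_lsqrt)
qed

lemma tcontinuous_on_if_lipschitz:
  assumes "\<And>y y'. y \<in> D \<Longrightarrow> y' \<in> D \<Longrightarrow> tnorm k (tdiff (f y') (f y)) \<le> L * tnorm k (tdiff y' y)"
  shows "tcontinuous_on k D f"
  unfolding tcontinuous_on_def
proof (intro ballI allI impI)
  fix y and e :: real assume y: "y \<in> D" and e: "e > 0"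
  show "\<exists>d>0. \<forall>y'\<in>D. tnorm k (tdiff y' y) < d \<longrightarrow> tnorm k (tdiff (f y') (f y)) < e"
  proof (intro exI conjI ballI impI)
    show "e / (\<bar>L\<bar> + 1) > 0" using e by simp
    fix y' assume "y' \<in> D" and close: "tnorm k (tdiff y' y) < e / (\<bar>L\<bar> + 1)"
    have "0 \<le> tnorm k (tdiff y' y)" by (simp add: tnorm_def tinner_self_nonneg)
    then have "tnorm k (tdiff (f y') (f y)) \<le> (\<bar>L\<bar> + 1) * tnorm k (tdiff y' y)"
      using assms[OF y \<open>y' \<in> D\<close>] by (smt (verit) mult_right_mono abs_ge_self)
    also have "\<dots> < e" using close by (simp add: field_simps add_pos_nonneg)
    finally show "tnorm k (tdiff (f y') (f y)) < e" .
  qed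
qed

lemma tclosed_coordinatewise_limit:
  assumes closed: "tclosed k C" and "\<And>m. s m \<in> C"
    and conv: "\<And>i. i \<in> {1..k} \<Longrightarrow> convergent (\<lambda>m. s m i)"
  obtains L where "L \<in> C" and "\<And>i. i \<in> {1..k} \<Longrightarrow> (\<lambda>m. s m i) \<longlonglongrightarrow> L i"
proof -
  define L where "L i = (if i \<in> {1..k} then lim (\<lambda>m. s m i) else 0)" for i
  have L: "(\<lambda>m. s m i) \<longlonglongrightarrow> L i" if "i \<in> {1..k}" for i
    using conv[OF that] that by (simp add: L_def convergent_LIMSEQ_iff)
  have "L \<in> tup k" by (simp add: L_def tup_def)
  moreover have "(\<lambda>m. tnorm k (tdiff (s m) L)) \<longlonglongrightarrow> 0" by (rule tnorm_tendsto_0) (rule L)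
  ultimately have "L \<in> C" using closed assms(2) unfolding tclosed_def by blast
  then show thesis using L that by blast
qed

lemma Cauchy_if_dist_bound:
  fixes x :: "nat \<Rightarrow> 'a::metric_space"
  assumes g: "g \<longlonglongrightarrow> 0" and bound: "\<And>m l. (dist (x m) (x l))\<^sup>2 \<le> g m + g l"
  shows "Cauchy x"
proof (rule metric_CauchyI)
  fix e :: real assume "e > 0"
  then obtain N where N: "\<And>m. m \<ge> N \<Longrightarrow> g m < e\<^sup>2 / 2"
    using order_tendstoD(2)[OF g, of "e\<^sup>2 / 2"] by (auto simp: eventually_sequentially)
  have "dist (x m) (x l) < e" if "m \<ge> N" "l \<ge> N" for m l
  proof (rule power2_less_imp_less)
    show "(dist (x m) (x l))\<^sup>2 < e\<^sup>2" using bound[of m l] N[OF that(1)] N[OF that(2)] by linarith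
  qed (use \<open>e > 0\<close> in simp)
  then show "\<exists>M. \<forall>m\<ge>M. \<forall>n\<ge>M. dist (x m) (x n) < e" by blast
qed

lemma tnearest_exists:
  fixes C :: "(nat \<Rightarrow> 'a::{real_inner,complete_space}) set"
  assumes "C \<noteq> {}" and closed: "tclosed k C"
    and mid: "\<And>a b. a \<in> C \<Longrightarrow> b \<in> C \<Longrightarrow> (\<lambda>i. (1/2) *\<^sub>R (a i + b i)) \<in> C"
  shows "\<exists>p\<in>C. \<forall>q\<in>C. tnorm k (tdiff z p) \<le> tnorm k (tdiff z q)"
proof -
  define f where "f q = tinner k (tdiff z q) (tdiff z q)" for q
  define \<delta> where "\<delta> = Inf (f ` C)"
  have bdd: "bdd_below (f ` C)" by (rule bdd_belowI[of _ 0]) (auto simp: f_def tinner_self_nonneg)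
  have low: "\<delta> \<le> f q" if "q \<in> C" for q unfolding \<delta>_def using bdd that by (simp add: cInf_lower)
  have "\<delta> \<in> closure (f ` C)"
    unfolding \<delta>_def using assms(1) bdd by (intro closure_contains_Inf) auto
  then obtain t where "\<And>m. t m \<in> f ` C" and t: "t \<longlonglongrightarrow> \<delta>"
    unfolding closure_sequential by blast
  then obtain s where sC: "\<And>m. s m \<in> C" and "t = (\<lambda>m. f (s m))"
    unfolding image_iff Bex_def by metis
  with t have fs: "(\<lambda>m. f (s m)) \<longlonglongrightarrow> \<delta>" by simp
  have conv: "convergent (\<lambda>m. s m i)" if i: "i \<in> {1..k}" for i
  proof (rule Cauchy_convergent[OF Cauchy_if_dist_bound])
    show "(\<lambda>m. 2 * (f (s m) - \<delta>)) \<longlonglongrightarrow> 0"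
      using tendsto_mult_right_zero[OF LIM_zero[OF fs], of 2] by simp
    fix m l
    have "(dist (s m i) (s l i))\<^sup>2 \<le> tinner k (tdiff (s m) (s l)) (tdiff (s m) (s l))"
      using norm_sq_le_tinner[OF i, of "tdiff (s m) (s l)"] by (simp add: dist_norm tdiff_def)
    also have "\<dots> \<le> 2 * (f (s m) - \<delta>) + 2 * (f (s l) - \<delta>)"
      \<comment> \<open>the midpoint of two near-minimisers lies in \<open>C\<close>, so by the parallelogram law
        they are close\<close>
      using tinner_parallelogram[of k "s m" "s l" z] low[OF mid[OF sC[of m] sC[of l]]]
      unfolding f_def by (simp add: algebra_simps)
    finally show "(dist (s m i) (s l i))\<^sup>2 \<le> 2 * (f (s m) - \<delta>) + 2 * (f (s l) - \<delta>)" .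
  qed
  obtain L where LC: "L \<in> C" and L: "\<And>i. i \<in> {1..k} \<Longrightarrow> (\<lambda>m. s m i) \<longlonglongrightarrow> L i"
    using tclosed_coordinatewise_limit[OF closed sC conv] by blast
  have "(\<lambda>m. f (s m)) \<longlonglongrightarrow> f L"
    unfolding f_def tinner_def tdiff_def by (auto intro!: tendsto_intros L)
  then have "f L = \<delta>" using fs LIMSEQ_unique by blast
  then show ?thesis using LC low by (auto simp: tnorm_le_iff f_def)
qed

section \<open>Orthogonal projections\<close>

definition tsubspace :: "nat \<Rightarrow> (nat \<Rightarrow> 'a::real_vector) set \<Rightarrow> bool" where
  "tsubspace k C \<longleftrightarrow> C \<subseteq> tup k \<and> (\<lambda>_. 0) \<in> C \<and>
     (\<forall>y\<in>C. \<forall>y'\<in>C. \<forall>a b. (\<lambda>i. a *\<^sub>R y i + b *\<^sub>R y' i) \<in> C)"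

lemma tsubspace_lincomb:
  "tsubspace k C \<Longrightarrow> y \<in> C \<Longrightarrow> y' \<in> C \<Longrightarrow> (\<lambda>i. a *\<^sub>R y i + b *\<^sub>R y' i) \<in> C"
  unfolding tsubspace_def by blast

lemma tsubspace_diff: "tsubspace k C \<Longrightarrow> y \<in> C \<Longrightarrow> y' \<in> C \<Longrightarrow> tdiff y y' \<in> C"
  using tsubspace_lincomb[of k C y y' 1 "-1"] by (simp add: tdiff_def)

definition is_tproj :: "nat \<Rightarrow> (nat \<Rightarrow> 'a::real_inner) set \<Rightarrow> (nat \<Rightarrow> 'a) \<Rightarrow> (nat \<Rightarrow> 'a) \<Rightarrow> bool" where
  "is_tproj k C z p \<longleftrightarrow> p \<in> C \<and> (\<forall>c\<in>C. tinner k (tdiff z p) c = 0)"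

lemma is_tproj_pythagoras:
  assumes C: "tsubspace k C" and p: "is_tproj k C z p" and q: "q \<in> C"
  shows "tinner k (tdiff z q) (tdiff z q)
           = tinner k (tdiff z p) (tdiff z p) + tinner k (tdiff p q) (tdiff p q)"
proof -
  have "tdiff z q = (\<lambda>i. tdiff z p i + tdiff p q i)" by (simp add: tdiff_def)
  moreover have "tinner k (tdiff z p) (tdiff p q) = 0"
    using p tsubspace_diff[OF C _ q] by (simp add: is_tproj_def)
  ultimately show ?thesis by (simp add: tinner_add_self)
qed

lemma tproj_eqI:
  assumes C: "tsubspace k C" and p: "is_tproj k C z p"
  shows "tproj k C z = p"
proof -
  have pC: "p \<in> C" using p by (simp add: is_tproj_def)
  have near: "tnorm k (tdiff z p) \<le> tnorm k (tdiff z q)" if "q \<in> C" for q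
    using is_tproj_pythagoras[OF C p that] tinner_self_nonneg[of k "tdiff p q"]
    by (simp add: tnorm_le_iff)
  define p' where "p' = tproj k C z"
  have "p' \<in> C \<and> (\<forall>q\<in>C. tnorm k (tdiff z p') \<le> tnorm k (tdiff z q))"
    unfolding p'_def tproj_def by (rule someI[of _ p]) (use pC near in blast)
  then have p'C: "p' \<in> C" and "tnorm k (tdiff z p') \<le> tnorm k (tdiff z p)" using pC by auto
  then have "tinner k (tdiff p p') (tdiff p p') \<le> 0"
    using is_tproj_pythagoras[OF C p p'C] by (simp add: tnorm_le_iff)
  then have p'_p: "tnorm k (tdiff p p') = 0"
    using tinner_self_nonneg[of k "tdiff p p'"] by (simp add: tnorm_def)
  have "p = p'"
  proof (rule tup_eqI)
    show "p \<in> tup k" "p' \<in> tup k" using C pC p'C by (auto simp: tsubspace_def)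
    show "p i = p' i" if "i \<in> {1..k}" for i
      using norm_le_tnorm[OF that, of "tdiff p p'"] p'_p by (simp add: tdiff_def)
  qed
  then show ?thesis by (simp add: p'_def)
qed

lemma linear_coeff_eq_0_if_quadratic_nonneg:
  fixes a b :: real
  assumes "\<And>t. 0 \<le> t\<^sup>2 * b - 2 * t * a"
  shows "a = 0"
proof -
  define c where "c = \<bar>b\<bar> + 1"
  have c: "c > 0" "b - 2 * c < 0" by (auto simp: c_def)
  have "0 \<le> c\<^sup>2 * ((a / c)\<^sup>2 * b - 2 * (a / c) * a)" using assms[of "a / c"] by simp
  also have "\<dots> = a\<^sup>2 * (b - 2 * c)" using c by (simp add: field_simps power2_eq_square)
  finally have "a\<^sup>2 \<le> 0" using c(2) by (simp add: zero_le_mult_iff)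
  then show "a = 0" by simp
qed

lemma is_tproj_tproj:
  fixes C :: "(nat \<Rightarrow> 'a::{real_inner,complete_space}) set"
  assumes C: "tsubspace k C" and closed: "tclosed k C"
  shows "is_tproj k C z (tproj k C z)"
proof -
  let ?nearest = "\<lambda>p. p \<in> C \<and> (\<forall>q\<in>C. tnorm k (tdiff z p) \<le> tnorm k (tdiff z q))"
  have "\<exists>p\<in>C. \<forall>q\<in>C. tnorm k (tdiff z p) \<le> tnorm k (tdiff z q)"
  proof (rule tnearest_exists[OF _ closed])
    show "C \<noteq> {}" using C by (auto simp: tsubspace_def)
    show "(\<lambda>i. (1/2) *\<^sub>R (a i + b i)) \<in> C" if "a \<in> C" "b \<in> C" for a b
      using tsubspace_lincomb[OF C that, of "1/2" "1/2"] by (simp add: scaleR_add_right)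
  qed
  then have "\<exists>p. ?nearest p" by blast
  then have "?nearest (tproj k C z)" unfolding tproj_def by (rule someI_ex)
  then obtain pC: "tproj k C z \<in> C"
    and near: "\<And>q. q \<in> C \<Longrightarrow> tinner k (tdiff z (tproj k C z)) (tdiff z (tproj k C z))
                                  \<le> tinner k (tdiff z q) (tdiff z q)"
    by (auto simp: tnorm_le_iff)
  define p where "p = tproj k C z"
  have "tinner k (tdiff z p) c = 0" if c: "c \<in> C" for c
  proof (rule linear_coeff_eq_0_if_quadratic_nonneg)
    fix t :: real
    have "(\<lambda>i. 1 *\<^sub>R p i + t *\<^sub>R c i) \<in> C"
      using tsubspace_lincomb[OF C pC c, of 1 t] by (simp add: p_def)
    moreover have "tdiff z (\<lambda>i. 1 *\<^sub>R p i + t *\<^sub>R c i) = (\<lambda>i. tdiff z p i - t *\<^sub>R c i)"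
      by (simp add: tdiff_def algebra_simps)
    ultimately have "tinner k (tdiff z p) (tdiff z p)
                       \<le> tinner k (\<lambda>i. tdiff z p i - t *\<^sub>R c i) (\<lambda>i. tdiff z p i - t *\<^sub>R c i)"
      using near by (fastforce simp: p_def)
    then show "0 \<le> t\<^sup>2 * tinner k c c - 2 * t * tinner k (tdiff z p) c"
      by (simp add: tinner_diff_scaleR_self)
  qed
  then show ?thesis using pC by (simp add: is_tproj_def p_def)
qed

lemma tsubspace_sum:
  assumes D: "tsubspace k D" and E: "tsubspace k E"
  shows "tsubspace k {(\<lambda>i. d i + e i) | d e. d \<in> D \<and> e \<in> E}"
  unfolding tsubspace_def
proof (intro conjI ballI allI)
  show "{(\<lambda>i. d i + e i) | d e. d \<in> D \<and> e \<in> E} \<subseteq> tup k"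
    using D E by (auto simp: tsubspace_def tup_def subset_iff)
  show "(\<lambda>_. 0) \<in> {(\<lambda>i. d i + e i) | d e. d \<in> D \<and> e \<in> E}"
    using D E by (force simp: tsubspace_def)
  fix y y' a b
  assume "y \<in> {(\<lambda>i. d i + e i) | d e. d \<in> D \<and> e \<in> E}"
    and "y' \<in> {(\<lambda>i. d i + e i) | d e. d \<in> D \<and> e \<in> E}"
  then obtain d e d' e' where "d \<in> D" "e \<in> E" "d' \<in> D" "e' \<in> E"
    and y: "y = (\<lambda>i. d i + e i)" and y': "y' = (\<lambda>i. d' i + e' i)" by blast
  then have dD: "(\<lambda>i. a *\<^sub>R d i + b *\<^sub>R d' i) \<in> D" and eE: "(\<lambda>i. a *\<^sub>R e i + b *\<^sub>R e' i) \<in> E"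
    using tsubspace_lincomb[OF D] tsubspace_lincomb[OF E] by blast+
  have eq: "(\<lambda>i. a *\<^sub>R y i + b *\<^sub>R y' i)
      = (\<lambda>i. (\<lambda>i. a *\<^sub>R d i + b *\<^sub>R d' i) i + (\<lambda>i. a *\<^sub>R e i + b *\<^sub>R e' i) i)"
    by (simp add: y y' algebra_simps)
  show "(\<lambda>i. a *\<^sub>R y i + b *\<^sub>R y' i) \<in> {(\<lambda>i. d i + e i) | d e. d \<in> D \<and> e \<in> E}"
    unfolding eq by (rule CollectI, rule exI, rule exI, rule conjI[OF refl conjI[OF dD eE]])
qed

lemma tproj_orthogonal_sum:
  assumes D: "tsubspace k D" and E: "tsubspace k E" and orth: "\<forall>d\<in>D. \<forall>e\<in>E. tinner k d e = 0"
    and p: "is_tproj k D z p" and q: "is_tproj k E z q"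
  shows "tproj k {(\<lambda>i. d i + e i) | d e. d \<in> D \<and> e \<in> E} z = (\<lambda>i. p i + q i)"
proof (rule tproj_eqI[OF tsubspace_sum[OF D E]])
  have pD: "p \<in> D" and qE: "q \<in> E" using p q by (auto simp: is_tproj_def)
  have "tinner k (tdiff z (\<lambda>i. p i + q i)) (\<lambda>i. d i + e i) = 0" if d: "d \<in> D" and e: "e \<in> E" for d e
  proof -
    have "tinner k (tdiff z (\<lambda>i. p i + q i)) (\<lambda>i. d i + e i)
        = tinner k (\<lambda>i. tdiff z p i - q i) d + tinner k (\<lambda>i. tdiff z q i - p i) e"
      by (simp add: tinner_add_right tdiff_def algebra_simps)
    also have "\<dots> = (tinner k (tdiff z p) d - tinner k d q)
                    + (tinner k (tdiff z q) e - tinner k p e)"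
      by (simp add: tinner_diff_left tinner_commute[of k q])
    also have "\<dots> = 0" using p q d e orth pD qE by (simp add: is_tproj_def)
    finally show ?thesis .
  qed
  then show "is_tproj k {(\<lambda>i. d i + e i) | d e. d \<in> D \<and> e \<in> E} z (\<lambda>i. p i + q i)"
    using pD qE unfolding is_tproj_def by blast
qed

lemma tclosed_coordinatewise:
  assumes closed: "\<And>j. j \<in> J \<Longrightarrow> closed (S j)"
    and cont: "\<And>j s w. j \<in> J \<Longrightarrow> (\<And>i. (\<lambda>m. s m i) \<longlonglongrightarrow> w i) \<Longrightarrow> (\<lambda>m. g j (s m)) \<longlonglongrightarrow> g j w"
  shows "tclosed k {w \<in> tup k. \<forall>j\<in>J. g j w \<in> S j}"
  unfolding tclosed_def
proof (intro conjI allI impI)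
  fix s w
  assume h: "(\<forall>m. s m \<in> {w \<in> tup k. \<forall>j\<in>J. g j w \<in> S j}) \<and> w \<in> tup k
               \<and> (\<lambda>m. tnorm k (tdiff (s m) w)) \<longlonglongrightarrow> 0"
  then have coord: "(\<lambda>m. s m i) \<longlonglongrightarrow> w i" for i by (intro tendsto_coord[of k s w]) auto
  have "g j w \<in> S j" if j: "j \<in> J" for j
  proof (rule Lim_in_closed_set[OF closed[OF j]])
    show "\<forall>\<^sub>F m in sequentially. g j (s m) \<in> S j" using h j by auto
    show "(\<lambda>m. g j (s m)) \<longlonglongrightarrow> g j w" by (rule cont[OF j coord])
  qed simp
  then show "w \<in> {w \<in> tup k. \<forall>j\<in>J. g j w \<in> S j}" using h by blast
qed blast

lemma tsubspace_coordinatewise: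
  assumes sub: "\<And>j. j \<in> J \<Longrightarrow> subspace (S j)"
    and lin: "\<And>j y y' a b. j \<in> J \<Longrightarrow> g j (\<lambda>i. a *\<^sub>R y i + b *\<^sub>R y' i) = a *\<^sub>R g j y + b *\<^sub>R g j y'"
  shows "tsubspace k {w \<in> tup k. \<forall>j\<in>J. g j w \<in> S j}"
  unfolding tsubspace_def
proof (intro conjI ballI allI)
  have "g j (\<lambda>_. 0) = 0" if "j \<in> J" for j
    using lin[OF that, of 0 "\<lambda>_. 0" 0 "\<lambda>_. 0"] by simp
  then show "(\<lambda>_. 0) \<in> {w \<in> tup k. \<forall>j\<in>J. g j w \<in> S j}"
    using sub by (auto simp: tup_def subspace_0)
  fix y y' a b assume "y \<in> {w \<in> tup k. \<forall>j\<in>J. g j w \<in> S j}" "y' \<in> {w \<in> tup k. \<forall>j\<in>J. g j w \<in> S j}"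
  then show "(\<lambda>i. a *\<^sub>R y i + b *\<^sub>R y' i) \<in> {w \<in> tup k. \<forall>j\<in>J. g j w \<in> S j}"
    using sub lin by (auto simp: tup_def intro!: subspace_add subspace_scale)
qed blast

lemma subspace_perp: "subspace (perp U)"
  unfolding subspace_def perp_def by (auto simp: inner_add_right)

lemma closed_perp: "closed (perp U)"
proof -
  have "perp U = (\<Inter>u\<in>U. {y. inner u y = 0})" by (auto simp: perp_def)
  then show ?thesis by (auto intro!: closed_INT closed_hyperplane)
qed

lemma proj_eqI:
  assumes S: "closed_subspace S" and p: "p \<in> S" and perp: "x - p \<in> perp S"
  shows "proj S x = p"
proof -
  have sub: "subspace S" and "closed S" using S by (auto simp: closed_subspace_def)
  have near: "\<forall>q\<in>S. dist x p \<le> dist x q"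
  proof
    fix q assume "q \<in> S"
    then have "orthogonal (x - p) (p - q)"
      using perp subspace_diff[OF sub p] by (auto simp: perp_def orthogonal_def inner_commute)
    then have "(norm (x - q))\<^sup>2 = (norm (x - p))\<^sup>2 + (norm (p - q))\<^sup>2"
      using norm_add_Pythagorean[of "x - p" "p - q"] by simp
    then have "(norm (x - p))\<^sup>2 \<le> (norm (x - q))\<^sup>2" by simp
    then show "dist x p \<le> dist x q" unfolding dist_norm by (rule power2_le_imp_le) simp
  qed
  have "proj S x \<in> S \<and> (\<forall>q\<in>S. norm (x - proj S x) \<le> norm (x - q))"
    unfolding proj_def by (rule someI[of _ p]) (use p near in \<open>simp add: dist_norm\<close>)
  then show ?thesis
    using any_closest_point_unique[OF subspace_imp_convex[OF sub] \<open>closed S\<close> p _ near]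
    by (metis dist_norm)
qed

lemma perp_decomposition:
  fixes S :: "'a::{real_inner,complete_space} set"
  assumes S: "closed_subspace S"
  obtains p where "p \<in> S" "x - p \<in> perp S"
proof -
  \<comment> \<open>\<open>X\<close> is identified with the tuples of length 1\<close>
  define C where "C = {w \<in> tup 1. \<forall>j\<in>{1}. w j \<in> S}"
  define e where "e y = (\<lambda>i::nat. if i = 1 then y else 0)" for y :: 'a
  have "is_tproj 1 C (e x) (tproj 1 C (e x))"
  proof (rule is_tproj_tproj)
    show "tsubspace 1 C" unfolding C_def
      by (rule tsubspace_coordinatewise) (use S in \<open>auto simp: closed_subspace_def\<close>)
    show "tclosed 1 C" unfolding C_def
      by (rule tclosed_coordinatewise) (use S in \<open>auto simp: closed_subspace_def\<close>)
  qed
  then obtain w where "w \<in> C" and orth: "\<And>c. c \<in> C \<Longrightarrow> tinner 1 (tdiff (e x) w) c = 0"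
    by (auto simp: is_tproj_def)
  have "e q \<in> C" if "q \<in> S" for q using that by (simp add: C_def e_def tup_def)
  then have "inner q (x - w 1) = 0" if "q \<in> S" for q
    using orth[of "e q"] that by (simp add: tinner_def tdiff_def e_def inner_commute)
  then show thesis using \<open>w \<in> C\<close> by (intro that[of "w 1"]) (auto simp: C_def perp_def)
qed

lemma proj_in: "closed_subspace S \<Longrightarrow> proj S x \<in> (S :: 'a::{real_inner,complete_space} set)"
  by (metis perp_decomposition proj_eqI)

lemma proj_perp:
  "closed_subspace S \<Longrightarrow> x - proj S x \<in> perp (S :: 'a::{real_inner,complete_space} set)"
  by (metis perp_decomposition proj_eqI)

lemma proj_add_eq_iff:
  fixes S :: "'a::{real_inner,complete_space} set"
  assumes "closed_subspace S" "x \<in> S"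
  shows "proj S (x + w) = x \<longleftrightarrow> w \<in> perp S"
  using proj_eqI[OF assms, of "x + w"] proj_perp[OF assms(1), of "x + w"] by auto

section \<open>The operator \<open>\<Psi>\<close> and the set \<open>E\<close>\<close>

text \<open>Since \<open>w 0 = 0\<close> and \<open>w (k + 1) = 0\<close>, for \<open>m = k + 1\<close> the last condition says
  \<open>w k \<in> U\<^sub>k\<^sub>+\<^sub>1\<^sup>\<bottom>\<close>.\<close>

definition perp_increments ::
    "nat \<Rightarrow> nat \<Rightarrow> (nat \<Rightarrow> 'a::real_inner set) \<Rightarrow> (nat \<Rightarrow> 'a) set" where
  "perp_increments k m U = {w \<in> tup k. \<forall>i\<in>{1..m}. w i - w (i - 1) \<in> perp (U i)}"

lemma tsubspace_perp_increments: "tsubspace k (perp_increments k m U)"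
  unfolding perp_increments_def
  by (rule tsubspace_coordinatewise) (auto simp: subspace_perp algebra_simps)

lemma tclosed_perp_increments: "tclosed k (perp_increments k m U)"
  unfolding perp_increments_def
  by (rule tclosed_coordinatewise) (auto simp: closed_perp intro: tendsto_diff)

lemma perp_increments_last:
  "perp_increments k (Suc k) U = {w \<in> perp_increments k k U. w k \<in> perp (U (Suc k))}"
proof -
  have "w (Suc k) - w k \<in> perp (U (Suc k)) \<longleftrightarrow> w k \<in> perp (U (Suc k))"
    if "w \<in> tup k" for w :: "nat \<Rightarrow> 'a"
    using tup_outside[OF that, of "Suc k"] subspace_neg[OF subspace_perp] by fastforce
  then show ?thesis by (auto simp: perp_increments_def atLeastAtMostSuc_conv)
qed

lemma inner_perp_increments:
  assumes x: "\<forall>j\<in>{1..m}. x \<in> U j" and w: "w \<in> perp_increments k m U"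
  shows "i \<le> m \<Longrightarrow> inner x (w i) = 0"
proof (induction i)
  case 0
  then show ?case using w tup_outside[of w k 0] by (simp add: perp_increments_def)
next
  case (Suc i)
  then have i: "Suc i \<in> {1..m}" by simp
  moreover have "\<forall>j\<in>{1..m}. w j - w (j - 1) \<in> perp (U j)"
    using w by (simp add: perp_increments_def)
  ultimately have "w (Suc i) - w (Suc i - 1) \<in> perp (U (Suc i))" by blast
  moreover have "x \<in> U (Suc i)" using x i by blast
  ultimately show ?case using Suc by (simp add: perp_def inner_diff_right)
qed

definition tconst :: "nat \<Rightarrow> 'a::zero \<Rightarrow> nat \<Rightarrow> 'a" where
  "tconst k x = (\<lambda>i. if 1 \<le> i \<and> i \<le> k then x else 0)"

lemma diag_iff: "d \<in> diag k Z \<longleftrightarrow> (\<exists>x\<in>Z. d = tconst k x)"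
  by (simp add: diag_def tconst_def)

lemma tconst_in_tup: "tconst k x \<in> tup k"
  by (simp add: tconst_def tup_def)

lemma tinner_tconst_perp_increments:
  assumes "k \<le> m" "\<forall>j\<in>{1..m}. x \<in> U j" "w \<in> perp_increments k m U"
  shows "tinner k (tconst k x) w = 0"
  unfolding tinner_def tconst_def using inner_perp_increments[OF assms(2,3)] assms(1)
  by (intro sum.neutral) auto

lemma range_Psi: "Psi n ` PsiDom n U = perp_increments (n - 1) (n - 1) U"
proof (intro equalityI subsetI)
  fix w assume "w \<in> Psi n ` PsiDom n U"
  then obtain y where y: "y \<in> PsiDom n U" and w: "w = Psi n y" by blast
  have "w i - w (i - 1) = y i" if "i \<in> {1..n - 1}" for i
    using that by (cases i) (auto simp: w Psi_def)
  then show "w \<in> perp_increments (n - 1) (n - 1) U"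
    using y by (auto simp: perp_increments_def PsiDom_def w Psi_def tup_def)
next
  fix w assume w: "w \<in> perp_increments (n - 1) (n - 1) U"
  then have w0: "w 0 = 0" and wt: "w \<in> tup (n - 1)"
    using tup_outside[of w "n - 1" 0] by (auto simp: perp_increments_def)
  define y where "y i = (if 1 \<le> i \<and> i \<le> n - 1 then w i - w (i - 1) else 0)" for i
  have "y \<in> PsiDom n U" using w by (auto simp: PsiDom_def tup_def y_def perp_increments_def)
  moreover have "Psi n y = w"
  proof (rule tup_eqI[of _ "n - 1"])
    show "Psi n y \<in> tup (n - 1)" by (simp add: Psi_def tup_def)
    show "Psi n y i = w i" if "i \<in> {1..n - 1}" for i
    proof -
      have "Psi n y i = (\<Sum>j\<in>{1..i}. w j - w (j - 1))" using that by (simp add: Psi_def y_def)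
      also have "\<dots> = w i" by (induction i) (simp_all add: w0 sum.cl_ivl_Suc)
      finally show ?thesis .
    qed
  qed (rule wt)
  ultimately show "w \<in> Psi n ` PsiDom n U" by blast
qed

lemma Eset_eq:
  assumes "1 \<le> n"
  shows "Eset n U = perp_increments (n - 1) n U"
proof -
  obtain k where "n = Suc k" using assms by (cases n) auto
  then show ?thesis by (simp add: Eset_def range_Psi perp_increments_last)
qed

lemma tlinear_on_Psi: "tlinear_on (n - 1) (PsiDom n U) (Psi n)"
  unfolding tlinear_on_def
proof (intro ballI allI conjI)
  fix y y' a b assume "y \<in> PsiDom n U" "y' \<in> PsiDom n U"
  then show "(\<lambda>i. a *\<^sub>R y i + b *\<^sub>R y' i) \<in> PsiDom n U"
    unfolding PsiDom_def tup_def
    by (auto intro!: subspace_add[OF subspace_perp] subspace_scale[OF subspace_perp])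
  show "Psi n (\<lambda>i. a *\<^sub>R y i + b *\<^sub>R y' i) = (\<lambda>i. a *\<^sub>R Psi n y i + b *\<^sub>R Psi n y' i)"
    by (rule ext) (simp add: Psi_def sum.distrib scaleR_sum_right)
qed

lemma range_Psi_subset_tup: "Psi n ` PsiDom n U \<subseteq> tup (n - 1)"
  by (auto simp: Psi_def tup_def)

lemma tcontinuous_on_Psi: "tcontinuous_on (n - 1) (PsiDom n U) (Psi n)"
proof (rule tcontinuous_on_if_lipschitz)
  fix y y' :: "nat \<Rightarrow> 'a"
  let ?k = "n - 1" and ?t = "tnorm (n - 1) (tdiff y' y)"
  have t: "0 \<le> ?t" by (simp add: tnorm_def tinner_self_nonneg)
  have "norm (tdiff (Psi n y') (Psi n y) i) \<le> real ?k * ?t" if i: "i \<in> {1..?k}" for i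
  proof -
    have "norm (tdiff (Psi n y') (Psi n y) i) = norm (\<Sum>j\<in>{1..i}. tdiff y' y j)"
      using i by (simp add: tdiff_def Psi_def sum_subtractf)
    also have "\<dots> \<le> (\<Sum>j\<in>{1..i}. ?t)"
      using i by (intro order_trans[OF norm_sum] sum_mono norm_le_tnorm) auto
    also have "\<dots> \<le> real ?k * ?t" using i t by (simp add: mult_right_mono)
    finally show ?thesis .
  qed
  then show "tnorm ?k (tdiff (Psi n y') (Psi n y)) \<le> (real ?k * real ?k) * ?t"
    using tnorm_le_if_norm_le[of "real ?k * ?t" ?k "tdiff (Psi n y') (Psi n y)"] t
    by (simp add: mult.assoc)
qed

lemma tclosed_range_Psi: "tclosed (n - 1) (Psi n ` PsiDom n U)"
  unfolding range_Psi by (rule tclosed_perp_increments)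

lemma Eset_subset_perpsum:
  "Eset n U \<subseteq> {w \<in> tup (n - 1). (\<forall>i\<in>{1..n - 1}. w i \<in> perpsum U i) \<and> w (n - 1) \<in> perp (U n)}"
proof
  fix w assume "w \<in> Eset n U"
  then obtain y where y: "y \<in> PsiDom n U" and w: "w = Psi n y" and "w (n - 1) \<in> perp (U n)"
    by (auto simp: Eset_def)
  moreover have "w i \<in> perpsum U i" if "i \<in> {1..n - 1}" for i
    using y that unfolding perpsum_def PsiDom_def w Psi_def by auto
  ultimately show "w \<in> {w \<in> tup (n - 1).
      (\<forall>i\<in>{1..n - 1}. w i \<in> perpsum U i) \<and> w (n - 1) \<in> perp (U n)}"
    using range_Psi_subset_tup by blast
qed

section \<open>Fixed points of \<open>T\<close>\<close>

lemma mx_Suc: "1 \<le> i \<Longrightarrow> mx P z (Suc i) = P (Suc i) (mx P z i + z (Suc i) - z i)"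
  by (cases i) (simp_all add: numeral_2_eq_2)

lemma mx_in:
  fixes U :: "nat \<Rightarrow> 'a::{real_inner,complete_space} set"
  assumes "1 \<le> i" "closed_subspace (U i)"
  shows "mx (\<lambda>j. proj (U j)) z i \<in> U i"
proof -
  obtain j where i: "i = Suc j" using assms(1) by (cases i) auto
  show ?thesis
  proof (cases "j = 0")
    case True
    then show ?thesis using assms(2) i by (simp add: proj_in)
  next
    case False
    then show ?thesis using assms(2) i by (simp add: mx_Suc proj_in)
  qed
qed

lemma Mop_in:
  fixes U :: "nat \<Rightarrow> 'a::{real_inner,complete_space} set"
  assumes "\<forall>i\<in>{1..n}. closed_subspace (U i)" "i \<in> {1..n}"
  shows "Mop n U z i \<in> U i"
  using assms by (auto simp: Mop_def mx_in proj_in)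

lemma mx_eq_const_iff:
  fixes U :: "nat \<Rightarrow> 'a::{real_inner,complete_space} set"
  assumes "\<forall>j\<in>{1..m}. closed_subspace (U j) \<and> x \<in> U j \<and> z j = x + e j" and e0: "e 0 = 0"
  shows "(\<forall>j\<in>{1..m}. mx (\<lambda>j. proj (U j)) z j = x) \<longleftrightarrow> (\<forall>j\<in>{1..m}. e j - e (j - 1) \<in> perp (U j))"
  using assms(1)
proof (induction m)
  case (Suc m)
  let ?x = "mx (\<lambda>j. proj (U j)) z"
  have U: "closed_subspace (U (Suc m))" "x \<in> U (Suc m)" and z: "z (Suc m) = x + e (Suc m)"
    using Suc.prems by auto
  have IH: "(\<forall>j\<in>{1..m}. ?x j = x) \<longleftrightarrow> (\<forall>j\<in>{1..m}. e j - e (j - 1) \<in> perp (U j))"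
    using Suc by auto
  have step: "?x (Suc m) = proj (U (Suc m)) (x + (e (Suc m) - e m))" if prev: "\<forall>j\<in>{1..m}. ?x j = x"
  proof (cases "m = 0")
    case True
    then show ?thesis using z e0 by simp
  next
    case False
    then have "?x m = x" "z m = x + e m" using prev Suc.prems by auto
    then show ?thesis using False z by (simp add: mx_Suc algebra_simps)
  qed
  show ?case
  proof (cases "\<forall>j\<in>{1..m}. ?x j = x")
    case True
    then show ?thesis
      using IH step[OF True] proj_add_eq_iff[OF U, of "e (Suc m) - e m"]
      by (simp add: atLeastAtMostSuc_conv)
  next
    case False
    then show ?thesis using IH by (auto simp: atLeastAtMostSuc_conv)
  qed
qed simp

lemma Mop_eq_const_iff:
  fixes U :: "nat \<Rightarrow> 'a::{real_inner,complete_space} set"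
  assumes n: "2 \<le> n" and U: "\<forall>j\<in>{1..n}. closed_subspace (U j)" and x: "\<forall>j\<in>{1..n}. x \<in> U j"
    and e: "e \<in> tup (n - 1)"
  shows "(\<forall>i\<in>{1..n}. Mop n U (\<lambda>i. tconst (n - 1) x i + e i) i = x)
           \<longleftrightarrow> e \<in> perp_increments (n - 1) n U"
proof -
  define z where "z = (\<lambda>i. tconst (n - 1) x i + e i)"
  let ?x = "mx (\<lambda>j. proj (U j)) z"
  have split: "{1..n} = insert n {1..n - 1}" using n by auto
  have e0: "e 0 = 0" and en: "e n = 0" using tup_outside[OF e] n by auto
  have zi: "z i = x + e i" if "i \<in> {1..n - 1}" for i using that by (simp add: z_def tconst_def)
  have first: "(\<forall>i\<in>{1..n - 1}. ?x i = x) \<longleftrightarrow> (\<forall>i\<in>{1..n - 1}. e i - e (i - 1) \<in> perp (U i))"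
    by (rule mx_eq_const_iff) (use U x zi e0 in auto)
  \<comment> \<open>the last entry of \<open>M z\<close> has the same shape as the others because \<open>e n = 0\<close>\<close>
  have last: "Mop n U z n = proj (U n) (x + (e n - e (n - 1)))" if "\<forall>i\<in>{1..n - 1}. ?x i = x"
  proof -
    have "?x 1 = x" "?x (n - 1) = x" "z (n - 1) = x + e (n - 1)"
      using that zi n by (auto simp del: mx.simps)
    moreover have "\<not> n \<le> n - 1" using n by simp
    ultimately show ?thesis using en by (simp add: Mop_def algebra_simps del: mx.simps)
  qed
  have "(\<forall>i\<in>{1..n}. Mop n U z i = x) \<longleftrightarrow> (\<forall>i\<in>{1..n - 1}. ?x i = x) \<and> Mop n U z n = x"
    unfolding split by (auto simp: Mop_def)
  also have "\<dots> \<longleftrightarrow> (\<forall>i\<in>{1..n - 1}. e i - e (i - 1) \<in> perp (U i)) \<and> e n - e (n - 1) \<in> perp (U n)"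
  proof (cases "\<forall>i\<in>{1..n - 1}. ?x i = x")
    case True
    have "closed_subspace (U n)" "x \<in> U n" using U x n by auto
    then show ?thesis
      using True first last[OF True] proj_add_eq_iff[of "U n" x "e n - e (n - 1)"] by simp
  qed (use first in blast)
  also have "\<dots> \<longleftrightarrow> e \<in> perp_increments (n - 1) n U"
    using e unfolding perp_increments_def split by (simp add: conj_commute)
  finally show ?thesis by (simp add: z_def)
qed

lemma consecutive_eq_iff_eq_first:
  "(\<forall>i\<in>{1..m}. f (Suc i) = f i) \<longleftrightarrow> (\<forall>i\<in>{1..Suc m}. f i = f 1)"
proof
  assume step: "\<forall>i\<in>{1..m}. f (Suc i) = f i"
  have const: "f i = f 1" if "1 \<le> i" "i \<le> Suc m" for i
    using that
  proof (induction i)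
    case (Suc i)
    show ?case
    proof (cases "i = 0")
      case False
      then have "i \<in> {1..m}" "1 \<le> i" "i \<le> Suc m" using Suc.prems by auto
      then have "f (Suc i) = f i" "f i = f 1" using step Suc.IH by blast+
      then show ?thesis by (rule trans)
    qed simp
  qed simp
  show "\<forall>i\<in>{1..Suc m}. f i = f 1"
  proof
    fix i assume "i \<in> {1..Suc m}"
    then have "1 \<le> i" "i \<le> Suc m" by auto
    then show "f i = f 1" by (rule const)
  qed
next
  assume const: "\<forall>i\<in>{1..Suc m}. f i = f 1"
  show "\<forall>i\<in>{1..m}. f (Suc i) = f i"
  proof
    fix i assume "i \<in> {1..m}"
    then have "Suc i \<in> {1..Suc m}" and "i \<in> {1..Suc m}" by auto
    then show "f (Suc i) = f i" by (rule trans[OF bspec[OF const] sym[OF bspec[OF const]]])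
  qed
qed

lemma Top_fixed_iff:
  assumes "1 \<le> n" and z: "z \<in> tup (n - 1)"
  shows "Top n U z = z \<longleftrightarrow> (\<forall>i\<in>{1..n}. Mop n U z i = Mop n U z 1)"
proof -
  have "Top n U z = z \<longleftrightarrow> (\<forall>i\<in>{1..n - 1}. Mop n U z (Suc i) = Mop n U z i)"
    using tup_outside[OF z] by (auto simp: Top_def fun_eq_iff)
  also have "\<dots> \<longleftrightarrow> (\<forall>i\<in>{1..n}. Mop n U z i = Mop n U z 1)"
    using consecutive_eq_iff_eq_first[of "n - 1" "Mop n U z"] assms(1) by simp
  finally show ?thesis .
qed

lemma FixT_eq:
  fixes U :: "nat \<Rightarrow> 'a::{real_inner,complete_space} set"
  assumes n: "2 \<le> n" and U: "\<forall>i\<in>{1..n}. closed_subspace (U i)"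
  shows "FixT n U = {(\<lambda>i. d i + e i) | d e. d \<in> diag (n - 1) (\<Inter>i\<in>{1..n}. U i) \<and> e \<in> Eset n U}"
proof (intro equalityI subsetI)
  fix z assume "z \<in> FixT n U"
  then have z: "z \<in> tup (n - 1)" and "Top n U z = z" by (auto simp: FixT_def)
  define x where "x = Mop n U z 1"
  have "1 \<le> n" using n by simp
  with z \<open>Top n U z = z\<close> have const: "\<forall>i\<in>{1..n}. Mop n U z i = x"
    unfolding x_def using Top_fixed_iff by blast
  then have x: "\<forall>j\<in>{1..n}. x \<in> U j" using Mop_in[OF U] by metis
  define e where "e i = z i - tconst (n - 1) x i" for i
  have e: "e \<in> tup (n - 1)" using z by (auto simp: e_def tup_def tconst_def)
  have ze: "z = (\<lambda>i. tconst (n - 1) x i + e i)" by (simp add: e_def)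
  have "\<forall>i\<in>{1..n}. Mop n U (\<lambda>i. tconst (n - 1) x i + e i) i = x" using const by (simp add: ze)
  then have "e \<in> Eset n U" using Mop_eq_const_iff[OF n U x e] n by (simp add: Eset_eq)
  moreover have "tconst (n - 1) x \<in> diag (n - 1) (\<Inter>i\<in>{1..n}. U i)" using x by (auto simp: diag_iff)
  ultimately show "z \<in> {(\<lambda>i. d i + e i) | d e. d \<in> diag (n - 1) (\<Inter>i\<in>{1..n}. U i) \<and> e \<in> Eset n U}"
    using ze by blast
next
  fix z assume "z \<in> {(\<lambda>i. d i + e i) | d e. d \<in> diag (n - 1) (\<Inter>i\<in>{1..n}. U i) \<and> e \<in> Eset n U}"
  then obtain x e where x: "\<forall>j\<in>{1..n}. x \<in> U j" and "e \<in> Eset n U"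
    and ze: "z = (\<lambda>i. tconst (n - 1) x i + e i)"
    by (auto simp: diag_iff)
  then have eE: "e \<in> perp_increments (n - 1) n U" and e: "e \<in> tup (n - 1)"
    using n by (auto simp: Eset_eq perp_increments_def)
  have "\<forall>i\<in>{1..n}. Mop n U z i = x" using Mop_eq_const_iff[OF n U x e] eE ze by simp
  moreover have "z \<in> tup (n - 1)" using e by (auto simp: ze tup_def tconst_def)
  ultimately show "z \<in> FixT n U" using Top_fixed_iff[of n z U] n by (simp add: FixT_def)
qed

section \<open>Projection onto \<open>Fix T\<close>\<close>

lemma tsubspace_diag:
  assumes "subspace Z"
  shows "tsubspace k (diag k Z)"
  unfolding tsubspace_def
proof (intro conjI ballI allI)
  show "diag k Z \<subseteq> tup k" by (auto simp: diag_iff tconst_in_tup)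
  show "(\<lambda>_. 0) \<in> diag k Z"
    using subspace_0[OF assms] by (auto simp: diag_iff tconst_def intro!: bexI[of _ 0])
  fix y y' a b assume "y \<in> diag k Z" "y' \<in> diag k Z"
  then obtain x x' where "x \<in> Z" "x' \<in> Z" "y = tconst k x" "y' = tconst k x'"
    by (auto simp: diag_iff)
  then show "(\<lambda>i. a *\<^sub>R y i + b *\<^sub>R y' i) \<in> diag k Z"
    using assms unfolding diag_iff
    by (intro bexI[of _ "a *\<^sub>R x + b *\<^sub>R x'"]) (auto simp: tconst_def subspace_add subspace_scale)
qed

lemma is_tproj_diag:
  fixes Z :: "'a::{real_inner,complete_space} set"
  assumes Z: "closed_subspace Z" and k: "1 \<le> k"
  shows "is_tproj k (diag k Z) z (tconst k (proj Z ((1 / real k) *\<^sub>R (\<Sum>i\<in>{1..k}. z i))))"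
proof -
  define zbar where "zbar = (1 / real k) *\<^sub>R (\<Sum>i\<in>{1..k}. z i)"
  have "tinner k (tdiff z (tconst k (proj Z zbar))) (tconst k x) = 0" if "x \<in> Z" for x
  proof -
    have "tinner k (tdiff z (tconst k (proj Z zbar))) (tconst k x)
            = inner ((\<Sum>i\<in>{1..k}. z i) - real k *\<^sub>R proj Z zbar) x"
      by (simp add: tinner_def tdiff_def tconst_def inner_diff_left inner_sum_left sum_subtractf)
    also have "\<dots> = real k * inner (zbar - proj Z zbar) x"
      using k by (simp add: zbar_def inner_diff_left right_diff_distrib)
    also have "inner (zbar - proj Z zbar) x = 0"
      using proj_perp[OF Z, of zbar] that by (simp add: perp_def inner_commute)
    finally show ?thesis by simp
  qed
  then show ?thesis using proj_in[OF Z] by (auto simp: is_tproj_def diag_iff zbar_def)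
qed

lemma closed_subspace_INT:
  "\<forall>i\<in>I. closed_subspace (U i) \<Longrightarrow> closed_subspace (\<Inter>i\<in>I. U i)"
  unfolding closed_subspace_def by (auto intro!: subspace_Inter closed_INT)

lemma tinner_diag_Eset:
  assumes "1 \<le> n" "d \<in> diag (n - 1) (\<Inter>i\<in>{1..n}. U i)" "e \<in> Eset n U"
  shows "tinner (n - 1) d e = 0"
proof -
  obtain x where "\<forall>j\<in>{1..n}. x \<in> U j" and "d = tconst (n - 1) x"
    using assms(2) by (auto simp: diag_iff)
  then show ?thesis
    using tinner_tconst_perp_increments[of "n - 1" n x U e] assms(1,3) by (simp add: Eset_eq)
qed

lemma tproj_FixT:
  fixes U :: "nat \<Rightarrow> 'a::{real_inner,complete_space} set"
  assumes n: "2 \<le> n" and U: "\<forall>i\<in>{1..n}. closed_subspace (U i)"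
  defines "Z \<equiv> \<Inter>i\<in>{1..n}. U i"
  shows "tproj (n - 1) (FixT n U) z
           = (\<lambda>i. tconst (n - 1) (proj Z ((1 / real (n - 1)) *\<^sub>R (\<Sum>i\<in>{1..n - 1}. z i))) i
                  + tproj (n - 1) (Eset n U) z i)"
proof -
  have Z: "closed_subspace Z" unfolding Z_def by (rule closed_subspace_INT[OF U])
  have E: "tsubspace (n - 1) (Eset n U)" "tclosed (n - 1) (Eset n U)"
    using n by (simp_all add: Eset_eq tsubspace_perp_increments tclosed_perp_increments)
  show ?thesis
    unfolding FixT_eq[OF n U, folded Z_def]
  proof (rule tproj_orthogonal_sum[OF _ E(1)])
    show "tsubspace (n - 1) (diag (n - 1) Z)"
      using Z by (simp add: tsubspace_diag closed_subspace_def)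
    show "\<forall>d\<in>diag (n - 1) Z. \<forall>e\<in>Eset n U. tinner (n - 1) d e = 0"
      using n tinner_diag_Eset[of n _ U] by (simp add: Z_def)
    show "is_tproj (n - 1) (diag (n - 1) Z) z
        (tconst (n - 1) (proj Z ((1 / real (n - 1)) *\<^sub>R (\<Sum>i\<in>{1..n - 1}. z i))))"
      using n by (intro is_tproj_diag Z) simp
  qed (rule is_tproj_tproj[OF E])
qed

lemma proj_first_tproj_FixT:
  fixes U :: "nat \<Rightarrow> 'a::{real_inner,complete_space} set"
  assumes n: "2 \<le> n" and U: "\<forall>i\<in>{1..n}. closed_subspace (U i)"
  defines "Z \<equiv> \<Inter>i\<in>{1..n}. U i"
  shows "proj (U 1) (tproj (n - 1) (FixT n U) z 1)
           = proj Z ((1 / real (n - 1)) *\<^sub>R (\<Sum>i\<in>{1..n - 1}. z i))"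
proof -
  define zbar where "zbar = (1 / real (n - 1)) *\<^sub>R (\<Sum>i\<in>{1..n - 1}. z i)"
  define e where "e = tproj (n - 1) (Eset n U) z"
  have "e \<in> perp_increments (n - 1) n U"
    using is_tproj_tproj[of "n - 1" "Eset n U" z] n
    by (simp add: e_def is_tproj_def Eset_eq tsubspace_perp_increments tclosed_perp_increments)
  then have "\<forall>i\<in>{1..n}. e i - e (i - 1) \<in> perp (U i)" and "e 0 = 0"
    using tup_outside[of e "n - 1" 0] by (auto simp: perp_increments_def)
  moreover have "1 \<in> {1..n}" using n by simp
  ultimately have "e 1 \<in> perp (U 1)" by force
  moreover have "proj Z zbar \<in> U 1"
    using proj_in[OF closed_subspace_INT[OF U]] n by (auto simp: Z_def)
  moreover have "tproj (n - 1) (FixT n U) z 1 = proj Z zbar + e 1"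
    using tproj_FixT[OF n U] n by (simp add: Z_def zbar_def e_def tconst_def le_diff_conv2)
  ultimately show ?thesis
    using proj_add_eq_iff[of "U 1" "proj Z zbar" "e 1"] U n by (simp add: zbar_def)
qed

theorem mainTheorem3:
  fixes U :: "nat \<Rightarrow> 'a::{real_inner, complete_space} set"
    and n :: nat
  assumes "n \<ge> 3"
    and "\<forall>i\<in>{1..n}. closed_subspace (U i)"
  defines "Z \<equiv> (\<Inter>i\<in>{1..n}. U i)"
  shows "tlinear_on (n - 1) (PsiDom n U) (Psi n)
    \<and> Psi n ` PsiDom n U \<subseteq> tup (n - 1)
    \<and> tcontinuous_on (n - 1) (PsiDom n U) (Psi n)
    \<and> tclosed (n - 1) (Psi n ` PsiDom n U)
    \<and> FixT n U = {(\<lambda>i. d i + e i) | d e. d \<in> diag (n - 1) Z \<and> e \<in> Eset n U}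
    \<and> (\<forall>d\<in>diag (n - 1) Z. \<forall>e\<in>Eset n U. tinner (n - 1) d e = 0)
    \<and> Eset n U \<subseteq> {w \<in> tup (n - 1). (\<forall>i\<in>{1..n - 1}. w i \<in> perpsum U i) \<and> w (n - 1) \<in> perp (U n)}
    \<and> (\<forall>z\<in>tup (n - 1).
         let zbar = (1 / real (n - 1)) *\<^sub>R (\<Sum>i\<in>{1..n - 1}. z i) in
         tproj (n - 1) (FixT n U) z
           = (\<lambda>i. (if 1 \<le> i \<and> i \<le> n - 1 then proj Z zbar else 0) + tproj (n - 1) (Eset n U) z i)
         \<and> proj (U 1) (tproj (n - 1) (FixT n U) z 1) = proj Z zbar)"
proof -
  have n: "2 \<le> n" using assms(1) by simp
  have FixT: "FixT n U = {(\<lambda>i. d i + e i) | d e. d \<in> diag (n - 1) Z \<and> e \<in> Eset n U}"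
    unfolding Z_def by (rule FixT_eq[OF n assms(2)])
  have orth: "tinner (n - 1) d e = 0" if "d \<in> diag (n - 1) Z" "e \<in> Eset n U" for d e
    using n tinner_diag_Eset[of n d U e] that by (simp add: Z_def)
  have FixT_proj: "tproj (n - 1) (FixT n U) z
      = (\<lambda>i. (if 1 \<le> i \<and> i \<le> n - 1 then proj Z ((1 / real (n - 1)) *\<^sub>R (\<Sum>i\<in>{1..n - 1}. z i))
               else 0) + tproj (n - 1) (Eset n U) z i)" for z
    using tproj_FixT[OF n assms(2)] unfolding Z_def tconst_def .
  have first_proj: "proj (U 1) (tproj (n - 1) (FixT n U) z 1)
      = proj Z ((1 / real (n - 1)) *\<^sub>R (\<Sum>i\<in>{1..n - 1}. z i))" for z
    using proj_first_tproj_FixT[OF n assms(2)] unfolding Z_def .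
  show ?thesis
    unfolding Let_def
    by (intro conjI ballI tlinear_on_Psi range_Psi_subset_tup tcontinuous_on_Psi tclosed_range_Psi
        Eset_subset_perpsum FixT orth FixT_proj first_proj)
qed

end
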